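(* Let $J'\subseteq J$ be nonempty, $t_o\in[0,T-\sum_{j\in J'}p_j]$, and let $\alpha$, $c_1<\dots<c_m$, $M$ and $B_\alpha$ be as in the context. Let $1\le q<m$ and let $t_\alpha\in[c_q,c_{q+1})$ with $t_\alpha\in[t_o,t_e-p_\alpha]$ and $t_\alpha\notin B_\alpha$. Let $j,k\in J'\setminus\{\alpha\}$ with $M(j)\le q<M(k)$. Then for every partial schedule of $J'$ starting at $t_o$ in which $\alpha$ starts at time $t_\alpha$, job $j$ is processed before $\alpha$ and job $k$ is processed after $\alpha$, no relation of the dominance rule between $\alpha$ and $j$, between $\alpha$ and $k$, or between $j$ and $k$ is violated (regardless of the start times of $j$ and $k$).
   Context: $J$ is a finite set of jobs; job $j$ has processing time $p_j>0$ and weight $w_j>0$; $T=\sum_{j\in J}p_j$. For $J'\subseteq J$ and $t_o\ge0$, a partial schedule of $J'$ starting at $t_o$ is an ordering of $J'$ processed consecutively without idle time from time $t_o$; job $j$ has (absolute) start time $t_j$. For $t\ge 0$, $\varphi_j(t)=\frac{w_j}{p_j(p_j+t)}$. For jobs $i,j$ with $w_ip_j\neq w_jp_i$, $t^*_{ij}=\frac{w_jp_i^2-w_ip_j^2}{w_ip_j-w_jp_i}$ (the unique real $t$ with $\varphi_i(t)=\varphi_j(t)$). Dominance rule: for an interval $I\subseteq[0,\infty)$, the relation "$i$ dominates $j$ on $I$" is violated by a (partial) schedule if $j$ is processed before $i$ and both $t_j\in I$ and $t_i-p_j\in I$. The rule contains, for each pair of distinct jobs $i,j$ with $(p_i,w_i)\ne(p_j,w_j)$: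 (1) if $\varphi_i(t)\ge\varphi_j(t)$ for all $t\ge 0$, "$i$ dominates $j$ on $[0,\infty)$"; (2) otherwise, if $\varphi_j(t)\ge\varphi_i(t)$ for all $t\ge0$, "$j$ dominates $i$ on $[0,\infty)$"; (3) otherwise, labelling the pair so that $\varphi_i(0)>\varphi_j(0)$, $t^*_{ij}>0$ is defined and the rule contains "$i$ dominates $j$ on $[0,t^*_{ij})$" and "$j$ dominates $i$ on $[t^*_{ij},\infty)$". Banned set: for $i\in J$, $B_i$ is the union over all $j\in J\setminus\{i\}$ with $\varphi_i(0)>\varphi_j(0)$, $w_ip_j\ne w_jp_i$ and $t^*_{ij}\in(0,T)$ of the intervals $[t^*_{ij},t^*_{ij}+p_j)$. Subproblem data: $t_e=t_o+\sum_{j\in J'}p_j$; $\alpha\in J'$ maximizes $\varphi_i(t_o)$ over $i\in J'$, ties broken in favour of maximum $\varphi_i(t_e)$; for $j\in J'\setminus\{\alpha\}$ with $t^*_{\alpha j}$ defined, $c_{\alpha j}=t^*_{\alpha j}+p_j$; $C=\{c_{\alpha j}: j\in J'\setminus\{\alpha\},\ t^*_{\alpha j}\text{ defined},\ c_{\alpha j}\in(t_o,t_e)\}\cup\{t_o,t_e\}$ with distinct elements $t_o=c_1<\dots<c_m=t_e$; $M(\alpha)=1$, and for $j\neq\alpha$, $M(j)=r$ if $t^*_{\alpha j}$ is defined, $t^*_{\alpha j}\in(t_o,t_e)$ and $c_{\alpha j}=c_r$ for some $r\le m$, and $M(j)=|J'|+1$ otherwise. *)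

theory Defs
  imports Main "HOL.Real"
begin

(* Jobs have type 'a; p, w :: 'a => real are processing times and weights. *)

definition phi :: "('a \<Rightarrow> real) \<Rightarrow> ('a \<Rightarrow> real) \<Rightarrow> 'a \<Rightarrow> real \<Rightarrow> real" where
  "phi p w j t = w j / (p j * (p j + t))"

definition tstar_defined :: "('a \<Rightarrow> real) \<Rightarrow> ('a \<Rightarrow> real) \<Rightarrow> 'a \<Rightarrow> 'a \<Rightarrow> bool" where
  "tstar_defined p w i j \<longleftrightarrow> w i * p j \<noteq> w j * p i"

definition tstar :: "('a \<Rightarrow> real) \<Rightarrow> ('a \<Rightarrow> real) \<Rightarrow> 'a \<Rightarrow> 'a \<Rightarrow> real" where
  "tstar p w i j = (w j * (p i)^2 - w i * (p j)^2) / (w i * p j - w j * p i)"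

definition dominates ::
  "'a set \<Rightarrow> ('a \<Rightarrow> real) \<Rightarrow> ('a \<Rightarrow> real) \<Rightarrow> 'a \<Rightarrow> 'a \<Rightarrow> real set \<Rightarrow> bool" where
  "dominates J p w i j I \<longleftrightarrow>
     i \<in> J \<and> j \<in> J \<and> i \<noteq> j \<and> (p i, w i) \<noteq> (p j, w j) \<and>
     ( ((\<forall>t\<ge>0. phi p w j t \<le> phi p w i t) \<and> I = {0..})
     \<or> (\<not> (\<forall>t\<ge>0. phi p w j t \<le> phi p w i t) \<and> \<not> (\<forall>t\<ge>0. phi p w i t \<le> phi p w j t) \<and>
          phi p w i 0 > phi p w j 0 \<and> I = {0..<tstar p w i j})
     \<or> (\<not> (\<forall>t\<ge>0. phi p w j t \<le> phi p w i t) \<and> \<not> (\<forall>t\<ge>0. phi p w i t \<le> phi p w j t) \<and>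
          phi p w j 0 > phi p w i 0 \<and> I = {tstar p w j i..}))"

definition is_partial_schedule :: "'a set \<Rightarrow> 'a list \<Rightarrow> bool" where
  "is_partial_schedule J' \<sigma> \<longleftrightarrow> distinct \<sigma> \<and> set \<sigma> = J'"

definition start_time :: "('a \<Rightarrow> real) \<Rightarrow> 'a list \<Rightarrow> real \<Rightarrow> 'a \<Rightarrow> real" where
  "start_time p \<sigma> to j = to + sum_list (map p (takeWhile (\<lambda>x. x \<noteq> j) \<sigma>))"

definition before :: "'a list \<Rightarrow> 'a \<Rightarrow> 'a \<Rightarrow> bool" where
  "before \<sigma> a b \<longleftrightarrow> (\<exists>xs ys. \<sigma> = xs @ b # ys \<and> a \<in> set xs)"

definition violates :: "('a \<Rightarrow> real) \<Rightarrow> 'a list \<Rightarrow> real \<Rightarrow> 'a \<Rightarrow> 'a \<Rightarrow> real set \<Rightarrow> bool" where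
  "violates p \<sigma> to i j I \<longleftrightarrow>
     before \<sigma> j i \<and> start_time p \<sigma> to j \<in> I \<and> start_time p \<sigma> to i - p j \<in> I"

definition banned :: "'a set \<Rightarrow> ('a \<Rightarrow> real) \<Rightarrow> ('a \<Rightarrow> real) \<Rightarrow> 'a \<Rightarrow> real set" where
  "banned J p w i = (\<Union>j \<in> {j \<in> J - {i}. phi p w i 0 > phi p w j 0 \<and> tstar_defined p w i j \<and>
                                   tstar p w i j \<in> {0<..<sum p J}}.
                       {tstar p w i j ..< tstar p w i j + p j})"

definition t_end :: "('a \<Rightarrow> real) \<Rightarrow> 'a set \<Rightarrow> real \<Rightarrow> real" where
  "t_end p J' to = to + sum p J'"

definition is_alpha :: "('a \<Rightarrow> real) \<Rightarrow> ('a \<Rightarrow> real) \<Rightarrow> 'a set \<Rightarrow> real \<Rightarrow> 'a \<Rightarrow> bool" where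
  "is_alpha p w J' to \<alpha> \<longleftrightarrow> \<alpha> \<in> J' \<and> (\<forall>i\<in>J'. phi p w i to \<le> phi p w \<alpha> to) \<and>
     (\<forall>i\<in>J'. phi p w i to = phi p w \<alpha> to \<longrightarrow> phi p w i (t_end p J' to) \<le> phi p w \<alpha> (t_end p J' to))"

definition Cset :: "('a \<Rightarrow> real) \<Rightarrow> ('a \<Rightarrow> real) \<Rightarrow> 'a set \<Rightarrow> real \<Rightarrow> 'a \<Rightarrow> real set" where
  "Cset p w J' to \<alpha> =
     {tstar p w \<alpha> j + p j | j. j \<in> J' - {\<alpha>} \<and> tstar_defined p w \<alpha> j \<and>
        tstar p w \<alpha> j + p j \<in> {to<..<t_end p J' to}} \<union> {to, t_end p J' to}"

text \<open>m = number of distinct elements of C, and c r (1 <= r <= m) the r-th smallest.\<close>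
definition mC :: "('a \<Rightarrow> real) \<Rightarrow> ('a \<Rightarrow> real) \<Rightarrow> 'a set \<Rightarrow> real \<Rightarrow> 'a \<Rightarrow> nat" where
  "mC p w J' to \<alpha> = card (Cset p w J' to \<alpha>)"

definition cseq :: "('a \<Rightarrow> real) \<Rightarrow> ('a \<Rightarrow> real) \<Rightarrow> 'a set \<Rightarrow> real \<Rightarrow> 'a \<Rightarrow> nat \<Rightarrow> real" where
  "cseq p w J' to \<alpha> r = sorted_list_of_set (Cset p w J' to \<alpha>) ! (r - 1)"

definition Mfun :: "('a \<Rightarrow> real) \<Rightarrow> ('a \<Rightarrow> real) \<Rightarrow> 'a set \<Rightarrow> real \<Rightarrow> 'a \<Rightarrow> 'a \<Rightarrow> nat" where
  "Mfun p w J' to \<alpha> j =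
     (if j = \<alpha> then 1
      else if tstar_defined p w \<alpha> j \<and> tstar p w \<alpha> j \<in> {to<..<t_end p J' to} \<and>
              (\<exists>r. 1 \<le> r \<and> r \<le> mC p w J' to \<alpha> \<and> tstar p w \<alpha> j + p j = cseq p w J' to \<alpha> r)
      then (THE r. 1 \<le> r \<and> r \<le> mC p w J' to \<alpha> \<and> tstar p w \<alpha> j + p j = cseq p w J' to \<alpha> r)
      else card J' + 1)"

end

theory Submission
  imports Defs
begin

text \<open>The difference \<open>\<phi> a t - \<phi> b t\<close> has the sign of an affine function of \<open>t\<close> vanishing
  at \<open>t*(a,b)\<close>, so two jobs change their \<open>\<phi>\<close>-order at most once. A job \<open>j\<close> with \<open>M(j) \<le> q\<close>
  overtakes \<open>\<alpha>\<close> at \<open>t*(\<alpha>,j) \<le> t\<alpha> - p j\<close>. A job \<open>k\<close> with \<open>M(k) > q\<close> does not overtake \<open>\<alpha>\<close>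
  before \<open>t\<alpha>\<close>: otherwise the slot \<open>[c q, c (q+1))\<close> would put \<open>t\<alpha>\<close> into
  \<open>[t*(\<alpha>,k), t*(\<alpha>,k) + p k) \<subseteq> B \<alpha>\<close>, the tie-break in the choice of \<open>\<alpha>\<close> excluding
  \<open>t*(\<alpha>,k) = to\<close>. Hence \<open>\<phi> k \<le> \<phi> \<alpha> \<le> \<phi> j\<close> on \<open>[t\<alpha> - p j, t\<alpha>]\<close>, with \<open>\<phi> \<alpha> < \<phi> j\<close> at \<open>t\<alpha>\<close>.
  On the other hand, wherever \<open>a\<close> dominates \<open>b\<close> we have \<open>\<phi> b \<le> \<phi> a\<close>, and a tie there means
  that \<open>a\<close> gains on \<open>b\<close> afterwards. In the order \<open>j, \<alpha>, k\<close> a violation would need such a tie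
  at \<open>t\<alpha> - p j\<close> (\<open>\<alpha>\<close> or \<open>k\<close> over \<open>j\<close>) or at \<open>t\<alpha>\<close> (\<open>k\<close> over \<open>\<alpha>\<close>), which the above excludes.\<close>

definition phi_slope :: "('a \<Rightarrow> real) \<Rightarrow> ('a \<Rightarrow> real) \<Rightarrow> 'a \<Rightarrow> 'a \<Rightarrow> real" where
  "phi_slope p w a b = w a * p b - w b * p a"

text \<open>\<open>phi p w a t - phi p w b t\<close> is \<open>phi_gap p w a b t\<close> divided by the positive number
  \<open>p a (p a + t) p b (p b + t)\<close>; the numerator is affine in \<open>t\<close>, with slope
  \<open>phi_slope p w a b\<close> and root \<open>tstar p w a b\<close>.\<close>
definition phi_gap :: "('a \<Rightarrow> real) \<Rightarrow> ('a \<Rightarrow> real) \<Rightarrow> 'a \<Rightarrow> 'a \<Rightarrow> real \<Rightarrow> real" where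
  "phi_gap p w a b t = w a * p b * (p b + t) - w b * p a * (p a + t)"

lemma phi_le_iff_gap:
  assumes "0 < p a" "0 < p b" "0 \<le> t"
  shows "phi p w b t \<le> phi p w a t \<longleftrightarrow> 0 \<le> phi_gap p w a b t"
  using assms unfolding phi_def phi_gap_def
  by (simp add: divide_simps mult.commute mult.left_commute add_pos_nonneg)

lemma phi_less_iff_gap:
  assumes "0 < p a" "0 < p b" "0 \<le> t"
  shows "phi p w b t < phi p w a t \<longleftrightarrow> 0 < phi_gap p w a b t"
  using assms unfolding phi_def phi_gap_def
  by (simp add: divide_simps mult.commute mult.left_commute add_pos_nonneg)

lemma phi_gap_affine: "phi_gap p w a b t = phi_gap p w a b s + phi_slope p w a b * (t - s)"
  unfolding phi_gap_def phi_slope_def by (simp add: algebra_simps)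

lemma phi_gap_eq_tstar:
  "phi_slope p w a b \<noteq> 0 \<Longrightarrow> phi_gap p w a b t = phi_slope p w a b * (t - tstar p w a b)"
  unfolding phi_gap_def phi_slope_def tstar_def by (simp add: field_simps power2_eq_square)

lemma phi_gap_swap: "phi_gap p w b a t = - phi_gap p w a b t"
  unfolding phi_gap_def by simp

lemma phi_slope_swap: "phi_slope p w b a = - phi_slope p w a b"
  unfolding phi_slope_def by simp

lemma tstar_commute: "tstar p w a b = tstar p w b a"
  unfolding tstar_def by (metis minus_diff_eq minus_divide_divide)

lemma tstar_defined_iff_slope: "tstar_defined p w a b \<longleftrightarrow> phi_slope p w a b \<noteq> 0"
  unfolding tstar_defined_def phi_slope_def by simp

lemma phi_le_iff_tstar_le:
  assumes "0 < p a" "0 < p b" "0 < phi_slope p w a b" "0 \<le> t"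
  shows "phi p w b t \<le> phi p w a t \<longleftrightarrow> tstar p w a b \<le> t"
  using assms by (simp add: phi_le_iff_gap phi_gap_eq_tstar zero_le_mult_iff)

lemma phi_less_iff_tstar_less:
  assumes "0 < p a" "0 < p b" "0 < phi_slope p w a b" "0 \<le> t"
  shows "phi p w b t < phi p w a t \<longleftrightarrow> tstar p w a b < t"
  using assms by (simp add: phi_less_iff_gap phi_gap_eq_tstar zero_less_mult_iff)

lemma phi_le_mono:
  assumes "0 < p a" "0 < p b" "0 \<le> phi_slope p w a b" "0 \<le> s" "s \<le> t"
    and "phi p w b s \<le> phi p w a s"
  shows "phi p w b t \<le> phi p w a t"
proof -
  have "0 \<le> phi_gap p w a b s" using assms(6) phi_le_iff_gap[of p a b s w] assms(1,2,4) by simp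
  moreover have "0 \<le> phi_slope p w a b * (t - s)" using assms by simp
  ultimately have "0 \<le> phi_gap p w a b t" using phi_gap_affine[of p w a b t s] by simp
  then show ?thesis using phi_le_iff_gap[of p a b t w] assms(1,2,4,5) by simp
qed

lemma phi_eq_slope_zero_imp_eq:
  assumes "0 < p a" "0 < p b" "0 < w a" "phi_slope p w a b = 0" "0 \<le> t"
    and "phi p w a t = phi p w b t"
  shows "(p a, w a) = (p b, w b)"
proof -
  have "phi_gap p w a b t = 0"
    using assms phi_le_iff_gap[of p a b t w] phi_le_iff_gap[of p b a t w] phi_gap_swap[of p w b a t]
    by force
  then have "phi_gap p w a b 0 = 0" using assms(4) phi_gap_affine[of p w a b 0 t] by simp
  moreover have "w b * p a = w a * p b" using assms(4) unfolding phi_slope_def by simp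
  ultimately have "w a * p b * p b = w a * p b * p a" unfolding phi_gap_def by simp
  then have "p b = p a" using assms(1-3) by simp
  then show ?thesis using assms(1,4) unfolding phi_slope_def by simp
qed

lemma dominates_cases:
  assumes "dominates J p w a b I" "0 < p a" "0 < p b"
  obtains (everywhere) "I = {0..}" "\<forall>t\<ge>0. phi p w b t \<le> phi p w a t" "(p a, w a) \<noteq> (p b, w b)"
  | (before_tstar) "phi_slope p w a b < 0" "I = {0..<tstar p w a b}"
  | (after_tstar) "0 < phi_slope p w a b" "0 < tstar p w a b" "I = {tstar p w a b..}"
proof -
  let ?g = "phi_gap p w a b" and ?s = "phi_slope p w a b"
  have ahead: "phi p w b t \<le> phi p w a t \<longleftrightarrow> 0 \<le> ?g t" if "0 \<le> t" for t
    using phi_le_iff_gap[of p a b t w] assms(2,3) that by simp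
  have behind: "phi p w a t < phi p w b t \<longleftrightarrow> ?g t < 0" if "0 \<le> t" for t
    using ahead[OF that] by linarith
  have affine: "?g t = ?g 0 + ?s * t" for t
    using phi_gap_affine[of p w a b t 0] by simp
  from assms(1) consider
      "I = {0..}" "\<forall>t\<ge>0. phi p w b t \<le> phi p w a t" "(p a, w a) \<noteq> (p b, w b)"
    | "\<not> (\<forall>t\<ge>0. phi p w b t \<le> phi p w a t)" "phi p w b 0 < phi p w a 0" "I = {0..<tstar p w a b}"
    | "\<not> (\<forall>t\<ge>0. phi p w a t \<le> phi p w b t)" "phi p w a 0 < phi p w b 0" "I = {tstar p w b a..}"
    unfolding dominates_def by blast
  then show ?thesis
  proof cases
    case 1
    then show ?thesis by (rule everywhere)
  next
    case 2
    then obtain t where t: "0 \<le> t" "\<not> phi p w b t \<le> phi p w a t" by blast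
    have "?g t < 0" using ahead[OF t(1)] t(2) by simp
    moreover have "0 < ?g 0" using 2 phi_less_iff_gap[of p a b 0 w] assms(2,3) by simp
    ultimately have "?s < 0"
      using affine[of t] t(1) by (smt (verit) mult_nonneg_nonneg)
    then show ?thesis using 2 by (intro before_tstar)
  next
    case 3
    then obtain t where t: "0 \<le> t" "\<not> phi p w a t \<le> phi p w b t" by blast
    have "0 < ?g t" using phi_less_iff_gap[of p a b t w] assms(2,3) t by simp
    moreover have g0: "?g 0 < 0" using 3 behind[of 0] by simp
    ultimately have s: "0 < ?s"
      using affine[of t] t(1) by (smt (verit) mult_nonpos_nonneg)
    then have "0 < tstar p w a b"
      using g0 phi_gap_eq_tstar[of p w a b 0] by (simp add: zero_less_mult_iff)
    then show ?thesis using 3 s tstar_commute[of p w a b] by (intro after_tstar) simp_all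
  qed
qed

lemma dominates_interval: "dominates J p w a b I \<Longrightarrow> x \<in> I \<Longrightarrow> y \<in> I \<Longrightarrow> {x..y} \<subseteq> I"
  unfolding dominates_def by auto

lemma dominates_phi_le:
  assumes "dominates J p w a b I" "0 < p a" "0 < p b" "t \<in> I"
  shows "phi p w b t \<le> phi p w a t"
  using assms(1-3)
proof (cases rule: dominates_cases)
  case everywhere
  then show ?thesis using assms(4) by simp
next
  case before_tstar
  then have "\<not> phi p w a t < phi p w b t"
    using assms(2-4) phi_less_iff_tstar_less[of p b a w t] phi_slope_swap[of p w b a]
      tstar_commute[of p w a b] by simp
  then show ?thesis by simp
next
  case after_tstar
  then show ?thesis using assms(2-4) phi_le_iff_tstar_le[of p a b w t] by simp
qed

lemma dominates_slope_pos:
  assumes "dominates J p w a b I" "0 < p a" "0 < p b" "0 < w a" "t \<in> I"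
    and "phi p w a t \<le> phi p w b t"
  shows "0 < phi_slope p w a b"
  using assms(1-3)
proof (cases rule: dominates_cases)
  case everywhere
  have t: "0 \<le> t" "phi p w a t = phi p w b t" using everywhere assms(5,6) by auto
  consider "phi_slope p w a b < 0" | "phi_slope p w a b = 0" | "0 < phi_slope p w a b"
    by linarith
  then show ?thesis
  proof cases
    case 1
    define t' where "t' = \<bar>tstar p w a b\<bar> + 1"
    have "phi p w a t' < phi p w b t'"
      using 1 assms(2,3) phi_less_iff_tstar_less[of p b a w t'] phi_slope_swap[of p w b a]
        tstar_commute[of p w a b] unfolding t'_def by simp
    moreover have "phi p w b t' \<le> phi p w a t'" using everywhere unfolding t'_def by simp
    ultimately show ?thesis by simp
  next
    case 2
    then have "(p a, w a) = (p b, w b)"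
      using t assms(2-4) by (intro phi_eq_slope_zero_imp_eq[of p a b w t])
    then show ?thesis using everywhere(3) by contradiction
  qed
next
  case before_tstar
  then have "\<not> phi p w a t \<le> phi p w b t"
    using assms(2,3,5) phi_le_iff_tstar_le[of p b a w t] phi_slope_swap[of p w b a]
      tstar_commute[of p w a b] by simp
  then show ?thesis using assms(6) by simp
qed

lemma start_time_before:
  assumes "distinct \<sigma>" "\<forall>x\<in>set \<sigma>. 0 \<le> p x" "before \<sigma> a b"
  shows "start_time p \<sigma> to a + p a \<le> start_time p \<sigma> to b"
proof -
  obtain xs ys where \<sigma>: "\<sigma> = xs @ b # ys" and "a \<in> set xs"
    using assms(3) unfolding before_def by blast
  then obtain us vs where xs: "xs = us @ a # vs" by (metis split_list)
  have "\<forall>x\<in>set xs. x \<noteq> b" "\<forall>x\<in>set us. x \<noteq> a" using assms(1) \<sigma> xs by auto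
  then have "takeWhile (\<lambda>x. x \<noteq> b) \<sigma> = xs" "takeWhile (\<lambda>x. x \<noteq> a) \<sigma> = us"
    unfolding \<sigma> xs by (simp_all add: takeWhile_append2)
  moreover have "0 \<le> sum_list (map p vs)"
    using assms(2) \<sigma> xs by (intro sum_list_nonneg) auto
  ultimately show ?thesis unfolding start_time_def xs by simp
qed

locale subproblem =
  fixes J J' :: "'a set" and p w :: "'a \<Rightarrow> real" and to :: real and \<alpha> :: 'a
  assumes finite_J: "finite J"
    and p_pos: "\<And>i. i \<in> J \<Longrightarrow> 0 < p i" and w_pos: "\<And>i. i \<in> J \<Longrightarrow> 0 < w i"
    and J'_subset: "J' \<subseteq> J" and to_nonneg: "0 \<le> to"
    and t_end_le: "t_end p J' to \<le> sum p J"
    and alpha: "is_alpha p w J' to \<alpha>"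
begin

abbreviation "te \<equiv> t_end p J' to"
abbreviation "C \<equiv> Cset p w J' to \<alpha>"
abbreviation "m \<equiv> mC p w J' to \<alpha>"
abbreviation "c \<equiv> cseq p w J' to \<alpha>"
abbreviation "M \<equiv> Mfun p w J' to \<alpha>"

lemma alpha_in_J': "\<alpha> \<in> J'"
  using alpha unfolding is_alpha_def by simp

lemma finite_J': "finite J'"
  using finite_subset[OF J'_subset finite_J] .

lemma p_pos_J': "i \<in> J' \<Longrightarrow> 0 < p i" and w_pos_J': "i \<in> J' \<Longrightarrow> 0 < w i"
  using p_pos w_pos J'_subset by auto

lemma to_less_te: "to < te"
  using finite_J' alpha_in_J' p_pos_J' unfolding t_end_def by (auto intro!: sum_pos)

lemma phi_le_alpha: "i \<in> J' \<Longrightarrow> phi p w i to \<le> phi p w \<alpha> to"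
  using alpha unfolding is_alpha_def by simp

text \<open>The tie-break in the choice of \<open>\<alpha>\<close> excludes a crossing exactly at \<open>to\<close>.\<close>
lemma overtakes_alpha_after_to:
  assumes "i \<in> J'" "0 < phi_slope p w i \<alpha>"
  shows "to < tstar p w i \<alpha>"
proof -
  have pos: "0 < p i" "0 < p \<alpha>" using assms(1) alpha_in_J' p_pos_J' by auto
  have "to \<le> tstar p w i \<alpha>"
    using phi_le_alpha[OF assms(1)] phi_less_iff_tstar_less[of p i \<alpha> w to] pos assms(2) to_nonneg
    by linarith
  moreover have "to \<noteq> tstar p w i \<alpha>"
  proof
    assume tie: "to = tstar p w i \<alpha>"
    then have "phi p w i to = phi p w \<alpha> to"
      using phi_le_alpha[OF assms(1)] phi_le_iff_tstar_le[of p i \<alpha> w to] pos assms(2) to_nonneg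
      by simp
    then have "phi p w i te \<le> phi p w \<alpha> te"
      using alpha assms(1) unfolding is_alpha_def by simp
    moreover have "phi p w \<alpha> te < phi p w i te"
      using phi_less_iff_tstar_less[of p i \<alpha> w te] pos assms(2) to_nonneg to_less_te tie by simp
    ultimately show False by simp
  qed
  ultimately show ?thesis by simp
qed

lemma finite_Cset: "finite C"
proof -
  have "C \<subseteq> (\<lambda>j. tstar p w \<alpha> j + p j) ` J' \<union> {to, te}" unfolding Cset_def by blast
  then show ?thesis by (rule finite_subset) (simp add: finite_J')
qed

lemma card_Cset_le: "m \<le> card J' + 1"
proof -
  have "m \<le> card ((\<lambda>j. tstar p w \<alpha> j + p j) ` (J' - {\<alpha>}) \<union> {to, te})"
    unfolding mC_def using finite_J' by (intro card_mono) (auto simp: Cset_def)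
  also have "\<dots> \<le> card (J' - {\<alpha>}) + 2"
    by (intro order.trans[OF card_Un_le] add_mono card_image_le)
      (auto simp: finite_J' card_insert_if)
  also have "\<dots> = card J' + 1"
    using finite_J' alpha_in_J'
    by (simp add: card_Diff_singleton) (metis Suc_pred card_gt_0_iff empty_iff)
  finally show ?thesis .
qed

lemma cseq_mono: "1 \<le> r \<Longrightarrow> r \<le> r' \<Longrightarrow> r' \<le> m \<Longrightarrow> c r \<le> c r'"
  unfolding cseq_def mC_def using finite_Cset
  by (intro sorted_nth_mono) (auto simp: sorted_sorted_list_of_set length_sorted_list_of_set)

lemma cseq_inj:
  assumes "1 \<le> r" "r \<le> m" "1 \<le> r'" "r' \<le> m" "c r = c r'"
  shows "r = r'"
proof -
  have "r - 1 = r' - 1"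
    using assms finite_Cset
      nth_eq_iff_index_eq[OF distinct_sorted_list_of_set, of "r - 1" C "r' - 1"]
    unfolding cseq_def mC_def by simp
  then show ?thesis using assms(1,3) by simp
qed

lemma Cset_index:
  assumes "x \<in> C"
  obtains r where "1 \<le> r" "r \<le> m" "c r = x"
proof -
  have "x \<in> set (sorted_list_of_set C)" using assms finite_Cset by simp
  then obtain i where "i < m" "sorted_list_of_set C ! i = x"
    unfolding mC_def by (metis in_set_conv_nth length_sorted_list_of_set)
  then show ?thesis by (intro that[of "Suc i"]) (simp_all add: cseq_def)
qed

lemma Mfun_eqI:
  assumes "j \<noteq> \<alpha>" "tstar_defined p w \<alpha> j" "tstar p w \<alpha> j \<in> {to<..<te}"
    and "1 \<le> r" "r \<le> m" "c r = tstar p w \<alpha> j + p j"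
  shows "M j = r"
proof -
  have "M j = (THE r. 1 \<le> r \<and> r \<le> m \<and> tstar p w \<alpha> j + p j = c r)"
    unfolding Mfun_def using assms by auto
  also have "\<dots> = r"
    using assms(4-6) cseq_inj by (intro the_equality) auto
  finally show ?thesis .
qed

lemma Mfun_le_card:
  assumes "j \<noteq> \<alpha>" "M j \<le> card J'"
  shows "tstar_defined p w \<alpha> j" "tstar p w \<alpha> j \<in> {to<..<te}"
    and "1 \<le> M j" "M j \<le> m" "c (M j) = tstar p w \<alpha> j + p j"
proof -
  have cond: "tstar_defined p w \<alpha> j \<and> tstar p w \<alpha> j \<in> {to<..<te} \<and>
      (\<exists>r. 1 \<le> r \<and> r \<le> m \<and> tstar p w \<alpha> j + p j = c r)"
  proof (rule ccontr)
    assume "\<not> ?thesis"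
    then have "M j = card J' + 1" unfolding Mfun_def using assms(1) by (simp only: if_False)
    then show False using assms(2) by simp
  qed
  then obtain r where r: "1 \<le> r" "r \<le> m" "c r = tstar p w \<alpha> j + p j" by auto
  then have "M j = r" using Mfun_eqI assms(1) cond by blast
  then show "1 \<le> M j" "M j \<le> m" "c (M j) = tstar p w \<alpha> j + p j" using r by simp_all
  show "tstar_defined p w \<alpha> j" "tstar p w \<alpha> j \<in> {to<..<te}" using cond by simp_all
qed

end

locale alpha_slot = subproblem +
  fixes q :: nat and t\<alpha> :: real
  assumes q_bounds: "1 \<le> q" "q < mC p w J' to \<alpha>"
    and t\<alpha>_slot: "cseq p w J' to \<alpha> q \<le> t\<alpha>" "t\<alpha> < cseq p w J' to \<alpha> (q + 1)"
    and t\<alpha>_bounds: "to \<le> t\<alpha>" "t\<alpha> < t_end p J' to"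
    and t\<alpha>_not_banned: "t\<alpha> \<notin> banned J p w \<alpha>"
begin

lemma early_job_overtakes_alpha:
  assumes "j \<in> J' - {\<alpha>}" "M j \<le> q"
  shows "0 < phi_slope p w j \<alpha>" "to < tstar p w j \<alpha>" "tstar p w j \<alpha> + p j \<le> t\<alpha>"
proof -
  have "M j \<le> card J'" using assms(2) q_bounds card_Cset_le by linarith
  note Mj = Mfun_le_card[OF _ this]
  have "c (M j) \<le> c q" using Mj assms q_bounds by (intro cseq_mono) auto
  then show "tstar p w j \<alpha> + p j \<le> t\<alpha>"
    using Mj assms(1) t\<alpha>_slot tstar_commute[of p w j \<alpha>] by auto
  show to_less: "to < tstar p w j \<alpha>" using Mj assms(1) tstar_commute[of p w j \<alpha>] by auto
  show "0 < phi_slope p w j \<alpha>"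
  proof (rule ccontr)
    assume "\<not> ?thesis"
    then have "0 < phi_slope p w \<alpha> j"
      using Mj(1) assms(1) tstar_defined_iff_slope phi_slope_swap[of p w \<alpha> j] by fastforce
    then have "tstar p w \<alpha> j \<le> to"
      using phi_le_iff_tstar_le[of p \<alpha> j w to] phi_le_alpha assms(1) alpha_in_J' p_pos_J'
        to_nonneg by auto
    then show False using to_less tstar_commute[of p w j \<alpha>] by simp
  qed
qed

lemma late_job_overtakes_after_t\<alpha>:
  assumes "k \<in> J' - {\<alpha>}" "q < M k" "0 < phi_slope p w k \<alpha>"
  shows "t\<alpha> < tstar p w k \<alpha>"
proof (rule ccontr)
  let ?s = "tstar p w k \<alpha>"
  assume "\<not> t\<alpha> < ?s"
  \<comment> \<open>we show \<open>t\<alpha> \<in> [?s, ?s + p k)\<close>, an interval contained in the banned set of \<open>\<alpha>\<close>\<close>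
  have pos: "0 < p k" "0 < p \<alpha>" using assms(1) alpha_in_J' p_pos_J' by auto
  have after_to: "to < ?s" using overtakes_alpha_after_to assms by blast
  have s: "tstar p w \<alpha> k = ?s" using tstar_commute by metis
  have defined: "tstar_defined p w \<alpha> k"
    using assms(3) tstar_defined_iff_slope phi_slope_swap[of p w \<alpha> k] by fastforce
  have "t\<alpha> < ?s + p k"
  proof (cases "?s + p k < te")
    case True
    have "tstar p w \<alpha> k + p k \<in> C"
      unfolding Cset_def using assms(1) defined after_to True pos s
      by (intro UnI1 CollectI exI[of _ k]) auto
    then obtain r where r: "1 \<le> r" "r \<le> m" "c r = ?s + p k"
      using Cset_index s by metis
    have "M k = r"
      using assms(1) defined after_to \<open>\<not> t\<alpha> < ?s\<close> t\<alpha>_bounds r s by (intro Mfun_eqI) auto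
    then have "c (q + 1) \<le> c r" using assms(2) r by (intro cseq_mono) auto
    then show ?thesis using t\<alpha>_slot r by simp
  next
    case False
    then show ?thesis using t\<alpha>_bounds by simp
  qed
  moreover have "phi p w k 0 < phi p w \<alpha> 0"
    using phi_le_iff_tstar_le[of p k \<alpha> w 0] pos assms(3) after_to to_nonneg by simp
  moreover have "?s < sum p J" using \<open>\<not> t\<alpha> < ?s\<close> t\<alpha>_bounds t_end_le by simp
  ultimately have "t\<alpha> \<in> banned J p w \<alpha>"
    unfolding banned_def using assms(1) J'_subset defined after_to to_nonneg
      \<open>\<not> t\<alpha> < ?s\<close> s by (intro UN_I[of k]) auto
  then show False using t\<alpha>_not_banned by contradiction
qed

lemma late_job_phi_le:
  assumes "k \<in> J' - {\<alpha>}" "q < M k" "to \<le> t" "t \<le> t\<alpha>"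
  shows "phi p w k t \<le> phi p w \<alpha> t"
proof -
  have pos: "0 < p k" "0 < p \<alpha>" using assms(1) alpha_in_J' p_pos_J' by auto
  show ?thesis
  proof (cases "0 < phi_slope p w k \<alpha>")
    case True
    then have "t < tstar p w k \<alpha>" using late_job_overtakes_after_t\<alpha> assms by fastforce
    then show ?thesis
      using phi_less_iff_tstar_less[of p k \<alpha> w t] pos True assms(3) to_nonneg by simp
  next
    case False
    then have "0 \<le> phi_slope p w \<alpha> k" using phi_slope_swap[of p w k \<alpha>] by simp
    then show ?thesis
      using phi_le_mono[of p \<alpha> k w to t] pos assms phi_le_alpha to_nonneg by simp
  qed
qed

lemma dominates_alpha_early:
  assumes "j \<in> J' - {\<alpha>}" "M j \<le> q" "dominates J p w \<alpha> j I"
  shows "t\<alpha> - p j \<notin> I"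
proof
  assume "t\<alpha> - p j \<in> I"
  moreover have "phi p w \<alpha> (t\<alpha> - p j) \<le> phi p w j (t\<alpha> - p j)"
    using early_job_overtakes_alpha[OF assms(1,2)] phi_le_iff_tstar_le[of p j \<alpha> w "t\<alpha> - p j"]
      assms(1) alpha_in_J' p_pos_J' to_nonneg by auto
  ultimately have "0 < phi_slope p w \<alpha> j"
    using assms(1,3) alpha_in_J' p_pos_J' w_pos_J' by (intro dominates_slope_pos) auto
  then show False
    using early_job_overtakes_alpha(1)[OF assms(1,2)] phi_slope_swap[of p w \<alpha> j] by simp
qed

lemma dominates_late_alpha:
  assumes "k \<in> J' - {\<alpha>}" "q < M k" "dominates J p w k \<alpha> I"
  shows "t\<alpha> \<notin> I"
proof
  assume t\<alpha>: "t\<alpha> \<in> I"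
  have pos: "0 < p k" "0 < p \<alpha>" using assms(1) alpha_in_J' p_pos_J' by auto
  have "phi p w k t\<alpha> \<le> phi p w \<alpha> t\<alpha>" using late_job_phi_le assms(1,2) t\<alpha>_bounds by simp
  then have slope: "0 < phi_slope p w k \<alpha>"
    using assms(1,3) t\<alpha> pos w_pos_J' by (intro dominates_slope_pos) auto
  have "phi p w \<alpha> t\<alpha> \<le> phi p w k t\<alpha>" using assms(3) t\<alpha> pos by (intro dominates_phi_le)
  then have "tstar p w k \<alpha> \<le> t\<alpha>"
    using phi_le_iff_tstar_le[of p k \<alpha> w t\<alpha>] pos slope t\<alpha>_bounds to_nonneg by simp
  then show False using late_job_overtakes_after_t\<alpha>[OF assms(1,2) slope] by simp
qed

lemma dominates_late_early:
  assumes "j \<in> J' - {\<alpha>}" "M j \<le> q" "k \<in> J' - {\<alpha>}" "q < M k" "dominates J p w k j I"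
  shows "t\<alpha> - p j \<notin> I"
proof
  let ?x = "t\<alpha> - p j"
  assume x: "?x \<in> I"
  have pos: "0 < p j" "0 < p k" "0 < p \<alpha>" using assms(1,3) alpha_in_J' p_pos_J' by auto
  note j = early_job_overtakes_alpha[OF assms(1,2)]
  have x_bounds: "to \<le> ?x" "?x < t\<alpha>" using j pos by auto
  have "phi p w k ?x \<le> phi p w \<alpha> ?x" using late_job_phi_le assms(3,4) x_bounds by simp
  also have "\<dots> \<le> phi p w j ?x"
    using j phi_le_iff_tstar_le[of p j \<alpha> w ?x] pos x_bounds to_nonneg by simp
  finally have slope: "0 < phi_slope p w k j"
    using assms(3,5) x pos w_pos_J' by (intro dominates_slope_pos) auto
  have "phi p w j ?x \<le> phi p w k ?x" using assms(5) x pos by (intro dominates_phi_le)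
  then have "tstar p w k j < t\<alpha>"
    using phi_le_iff_tstar_le[of p k j w ?x] pos slope x_bounds to_nonneg by simp
  then have "phi p w j t\<alpha> < phi p w k t\<alpha>"
    using phi_less_iff_tstar_less[of p k j w t\<alpha>] pos slope x_bounds to_nonneg by simp
  moreover have "phi p w k t\<alpha> \<le> phi p w \<alpha> t\<alpha>" using late_job_phi_le assms(3,4) t\<alpha>_bounds by simp
  moreover have "phi p w \<alpha> t\<alpha> < phi p w j t\<alpha>"
    using j phi_less_iff_tstar_less[of p j \<alpha> w t\<alpha>] pos x_bounds to_nonneg by simp
  ultimately show False by simp
qed

lemma no_violation:
  assumes j: "j \<in> J' - {\<alpha>}" "M j \<le> q" and k: "k \<in> J' - {\<alpha>}" "q < M k"
    and sched: "is_partial_schedule J' \<sigma>" "start_time p \<sigma> to \<alpha> = t\<alpha>"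
    and order: "before \<sigma> j \<alpha>" "before \<sigma> \<alpha> k"
    and ab: "a \<in> {\<alpha>, j, k}" "b \<in> {\<alpha>, j, k}" and dom: "dominates J p w a b I"
  shows "\<not> violates p \<sigma> to a b I"
proof
  assume "violates p \<sigma> to a b I"
  have dist: "distinct \<sigma>" and nonneg: "\<forall>x\<in>set \<sigma>. 0 \<le> p x"
    using sched(1) p_pos_J' unfolding is_partial_schedule_def by (auto intro: less_imp_le)
  let ?t = "start_time p \<sigma> to"
  have times: "?t j + p j \<le> t\<alpha>" "t\<alpha> + p \<alpha> \<le> ?t k"
    using start_time_before[OF dist nonneg] order sched(2) by auto
  have pos: "0 < p j" "0 < p k" "0 < p \<alpha>" using j k alpha_in_J' p_pos_J' by auto
  have "?t b + p b \<le> ?t a" "?t b \<in> I" "?t a - p b \<in> I"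
    using \<open>violates p \<sigma> to a b I\<close> start_time_before[OF dist nonneg] unfolding violates_def by auto
  moreover have "a \<noteq> b" using dom unfolding dominates_def by simp
  ultimately consider "a = \<alpha>" "b = j" | "a = k" "b = \<alpha>" | "a = k" "b = j"
    using ab times pos sched(2) by auto
  then show False
  proof cases
    case 1
    then show False using dominates_alpha_early j dom \<open>?t a - p b \<in> I\<close> sched(2) by auto
  next
    case 2
    then show False using dominates_late_alpha k dom \<open>?t b \<in> I\<close> sched(2) by auto
  next
    case 3
    then have "t\<alpha> - p j \<in> I"
      using dominates_interval[OF dom \<open>?t b \<in> I\<close> \<open>?t a - p b \<in> I\<close>] times pos by auto
    then show False using dominates_late_early j k dom 3 by auto
  qed
qed

end

theorem lemma7:
  fixes J J' :: "'a set" and p w :: "'a \<Rightarrow> real" and to t\<alpha> :: real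
    and \<alpha> j k :: 'a and q :: nat and \<sigma> :: "'a list"
  assumes finJ: "finite J"
    and pos_p: "\<forall>i\<in>J. p i > 0" and pos_w: "\<forall>i\<in>J. w i > 0"
    and sub: "J' \<subseteq> J" and ne: "J' \<noteq> {}"
    and to_range: "0 \<le> to" "to \<le> sum p J - sum p J'"
    and alpha: "is_alpha p w J' to \<alpha>"
    and q: "1 \<le> q" "q < mC p w J' to \<alpha>"
    and ta_c: "cseq p w J' to \<alpha> q \<le> t\<alpha>" "t\<alpha> < cseq p w J' to \<alpha> (q + 1)"
    and ta_range: "to \<le> t\<alpha>" "t\<alpha> \<le> t_end p J' to - p \<alpha>"
    and ta_nb: "t\<alpha> \<notin> banned J p w \<alpha>"
    and j: "j \<in> J' - {\<alpha>}" and k: "k \<in> J' - {\<alpha>}"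
    and Mj: "Mfun p w J' to \<alpha> j \<le> q" and Mk: "q < Mfun p w J' to \<alpha> k"
    and sched: "is_partial_schedule J' \<sigma>"
    and start_a: "start_time p \<sigma> to \<alpha> = t\<alpha>"
    and j_before: "before \<sigma> j \<alpha>" and k_after: "before \<sigma> \<alpha> k"
  shows "\<forall>a\<in>{\<alpha>, j, k}. \<forall>b\<in>{\<alpha>, j, k}. \<forall>I.
           dominates J p w a b I \<longrightarrow> \<not> violates p \<sigma> to a b I"
proof -
  have "t\<alpha> < t_end p J' to" using ta_range(2) alpha sub pos_p unfolding is_alpha_def by force
  then interpret alpha_slot J J' p w to \<alpha> q t\<alpha>
    using finJ pos_p pos_w sub to_range alpha q ta_c ta_range(1) ta_nb
    by unfold_locales (auto simp: t_end_def)
  show ?thesis using no_violation[OF j Mj k Mk sched start_a j_before k_after] by blast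
qed

end
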